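(* Let $(X,\|\cdot\|)$ be a real Banach space and let $K\subseteq X^*$ be a precisely norming set for $X$. Let $I,J$ be disjoint subsets of the integers (one of them possibly empty), and let $(K_n)_{n\in I\cup J}$ be weak$^*$ compact subsets of $K$ with $K=\bigcup_{n\in I\cup J}K_n$. Let $(C_i)_{i\in I}\subset(1,2)$ and $(\varepsilon_j)_{j\in J}\subset(0,1)$ be such that $C_i \searrow 1$ if $I$ is infinite and $\varepsilon_j\searrow 0$ if $J$ is infinite. Assume: (i) for every $i\in I$ there is a norm $\|\cdot\|_i$ on $X\mid K_i$ such that $\|y\|_\infty\le\|y\|_i\le C_i\|y\|_\infty$ for all $y\in X\mid K_i$, and the normed space $(X\mid K_i,\|\cdot\|_i)$ has a countable precisely norming set; (ii) for every $j\in J$ there is a finite set $A_j\subseteq K_j$ such that for every $x\in X$: if $\|x\|=\|x\mid K_j\|_\infty$, then $\|x\|\le\frac{1}{1-\varepsilon_j}\max_{a\in A_j}|a(x)|$. Then $X$ is isomorphically polyhedral.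
   Context: For a normed space $(Z,\|\cdot\|)$, a set $D\subseteq Z^*$ is precisely norming if $D\subseteq Ba(Z^* )$, $\|z\|=\sup_{d\in D}|d(z)|$ for all $z\in Z$, and for every $z\in Z$ there is $d_0\in D$ with $|d_0(z)|=\sup_{d\in D}|d(z)|$. For a weak$^*$ compact $L\subseteq X^*$, $C(L)$ denotes the continuous functions on $L$ (weak$^*$ topology) with the sup norm $\|\cdot\|_\infty$; for $x\in X$, $x\mid L\in C(L)$ is the function $\ell\mapsto \ell(x)$, and $X\mid L=\{x\mid L: x\in X\}$, a (possibly non-complete) normed subspace of $C(L)$. An infinite dimensional Banach space is polyhedral if the closed unit ball of each of its finite dimensional subspaces has finitely many extreme points; it is isomorphically polyhedral if it is polyhedral under some equivalent norm. *)

theory Defs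
  imports "HOL-Analysis.Analysis"
begin

text \<open>Elements of the dual X* are represented as real-valued linear functions on X;
  the weak* topology is the topology of pointwise convergence, i.e. the product
  topology on the function type 'a \<Rightarrow> real (HOL-Analysis Function_Topology).\<close>

definition precisely_norming_X :: "('a::real_normed_vector \<Rightarrow> real) set \<Rightarrow> bool" where
  "precisely_norming_X D \<longleftrightarrow>
     (\<forall>d\<in>D. linear d \<and> (\<forall>x. \<bar>d x\<bar> \<le> norm x)) \<and>
     (\<forall>x. \<exists>d0\<in>D. \<bar>d0 x\<bar> = norm x)"

definition restr :: "('a \<Rightarrow> real) set \<Rightarrow> 'a \<Rightarrow> (('a \<Rightarrow> real) \<Rightarrow> real)" where
  "restr L x = (\<lambda>l. if l \<in> L then l x else 0)"

definition XL :: "('a \<Rightarrow> real) set \<Rightarrow> (('a \<Rightarrow> real) \<Rightarrow> real) set" where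
  "XL L = range (restr L)"

definition supnorm :: "('a \<Rightarrow> real) set \<Rightarrow> (('a \<Rightarrow> real) \<Rightarrow> real) \<Rightarrow> real" where
  "supnorm L y = (if L = {} then 0 else (SUP l\<in>L. \<bar>y l\<bar>))"

definition norm_on_XL :: "('a \<Rightarrow> real) set \<Rightarrow> ((('a \<Rightarrow> real) \<Rightarrow> real) \<Rightarrow> real) \<Rightarrow> bool" where
  "norm_on_XL L N \<longleftrightarrow>
     (\<forall>y\<in>XL L. (N y = 0 \<longleftrightarrow> y = (\<lambda>_. 0))) \<and>
     (\<forall>y\<in>XL L. \<forall>c. N (\<lambda>l. c * y l) = \<bar>c\<bar> * N y) \<and>
     (\<forall>y\<in>XL L. \<forall>z\<in>XL L. N (\<lambda>l. y l + z l) \<le> N y + N z)"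

definition precisely_norming_XL ::
  "('a \<Rightarrow> real) set \<Rightarrow> ((('a \<Rightarrow> real) \<Rightarrow> real) \<Rightarrow> real)
     \<Rightarrow> ((('a \<Rightarrow> real) \<Rightarrow> real) \<Rightarrow> real) set \<Rightarrow> bool" where
  "precisely_norming_XL L N D \<longleftrightarrow>
     (\<forall>d\<in>D. (\<forall>y\<in>XL L. \<forall>z\<in>XL L. \<forall>a b. d (\<lambda>l. a * y l + b * z l) = a * d y + b * d z) \<and>
            (\<forall>y\<in>XL L. \<bar>d y\<bar> \<le> N y)) \<and>
     (\<forall>y\<in>XL L. \<exists>d0\<in>D. \<bar>d0 y\<bar> = N y)"

definition is_norm :: "('a::real_vector \<Rightarrow> real) \<Rightarrow> bool" where
  "is_norm N \<longleftrightarrow> (\<forall>x. N x = 0 \<longleftrightarrow> x = 0) \<and> (\<forall>x c. N (c *\<^sub>R x) = \<bar>c\<bar> * N x) \<and>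
                 (\<forall>x y. N (x + y) \<le> N x + N y)"

definition polyhedral_norm :: "('a::real_vector \<Rightarrow> real) \<Rightarrow> bool" where
  "polyhedral_norm N \<longleftrightarrow>
     (\<forall>Y. subspace Y \<and> (\<exists>B. finite B \<and> Y = span B) \<longrightarrow>
          finite {x. x extreme_point_of {y\<in>Y. N y \<le> 1}})"

definition isomorphically_polyhedral :: "'a::real_normed_vector itself \<Rightarrow> bool" where
  "isomorphically_polyhedral _ \<longleftrightarrow>
     (\<exists>N::'a \<Rightarrow> real. is_norm N \<and> (\<exists>c>0. \<exists>C>0. \<forall>x. c * norm x \<le> N x \<and> N x \<le> C * norm x) \<and>
        polyhedral_norm N)"

end

theory Submission
  imports Defs
begin

text \<open>The new norm is \<open>N x = sup |h l x|\<close> over a family of functionals: for \<open>i \<in> I\<close> the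
  members \<open>d\<^sub>i\<^sub>m\<close> of the countable precisely norming set of \<open>(X|K\<^sub>i, \<parallel>\<cdot>\<parallel>\<^sub>i)\<close>, composed with
  restriction and weighted by \<open>C\<^sub>i + (C\<^sub>i - 1) 2\<^sup>-\<^sup>m\<close>, and for \<open>j \<in> J\<close> the functionals
  \<open>a \<in> A\<^sub>j\<close> weighted by \<open>(1 + \<epsilon>\<^sub>j) / (1 - \<epsilon>\<^sub>j)\<close>. Every weight exceeds the corresponding
  constant, so \<open>\<parallel>x\<parallel> < N x\<close> for \<open>x \<noteq> 0\<close>, while the weights tend to \<open>1\<close> as \<open>C\<^sub>i \<rightarrow> 1\<close>
  and \<open>\<epsilon>\<^sub>j \<rightarrow> 0\<close>. Hence at every \<open>x \<noteq> 0\<close> all but finitely many \<open>|h l|\<close> stay uniformly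
  below \<open>N\<close>, and by the uniform Lipschitz bound this persists near \<open>x\<close>. Covering the compact
  unit sphere of a finite-dimensional subspace by finitely many such neighbourhoods shows
  that there the unit ball of \<open>N\<close> is cut out by finitely many slabs \<open>|h l| \<le> 1\<close>, so it has
  finitely many extreme points. Of the limit hypotheses only the finiteness of
  \<open>{i. C\<^sub>i \<ge> 1 + e}\<close> and \<open>{j. \<epsilon>\<^sub>j \<ge> e}\<close> is used.\<close>

section \<open>Compactness in finite-dimensional subspaces\<close>

lemma closed_if_compact_Int_cballs:
  fixes S :: "'a::real_normed_vector set"
  assumes "\<And>R. compact (S \<inter> cball 0 R)"
  shows "closed S"
proof -
  have "x \<in> S" if x: "x \<in> closure S" for x
  proof -
    let ?B = "ball (0::'a) (norm x + 1)"
    have "x \<in> ?B \<inter> closure S" using x by auto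
    also have "\<dots> \<subseteq> closure (?B \<inter> S)" by (rule open_Int_closure_subset) simp
    also have "\<dots> \<subseteq> closure (S \<inter> cball 0 (norm x + 1))" by (intro closure_mono) auto
    also have "\<dots> = S \<inter> cball 0 (norm x + 1)" using assms compact_imp_closed closure_closed by blast
    finally show "x \<in> S" by blast
  qed
  then show ?thesis using closure_subset_eq by blast
qed

lemma abs_scale_infdist_span_le_norm:
  fixes b z :: "'a::real_normed_vector"
  assumes "z \<in> span B"
  shows "\<bar>t\<bar> * infdist b (span B) \<le> norm (z + t *\<^sub>R b)"
proof (cases "t = 0")
  case False
  have "- (inverse t) *\<^sub>R z \<in> span B" using assms span_scale by blast
  then have "infdist b (span B) \<le> dist b (- (inverse t) *\<^sub>R z)" by (rule infdist_le)
  also have "\<dots> = norm ((inverse t) *\<^sub>R (z + t *\<^sub>R b))"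
    using False by (simp add: dist_norm algebra_simps)
  also have "\<dots> = norm (z + t *\<^sub>R b) / \<bar>t\<bar>" by (simp add: divide_inverse_commute)
  finally show ?thesis using False by (simp add: field_simps)
qed simp

lemma compact_span_insert_Int_cball:
  fixes b :: "'a::real_normed_vector"
  assumes IH: "\<And>R. compact (span B \<inter> cball 0 R)" and "b \<notin> span B"
  shows "compact (span (insert b B) \<inter> cball 0 R)"
proof -
  have "closed (span B)" using IH by (rule closed_if_compact_Int_cballs)
  then have \<delta>_pos: "infdist b (span B) > 0"
    using infdist_pos_not_in_closed \<open>b \<notin> span B\<close> span_zero by blast
  define T where "T = max 0 R / infdist b (span B)"
  define P where "P = (span B \<inter> cball 0 (max 0 R + T * norm b)) \<times> {-T..T}"
  define f where "f = (\<lambda>p. fst p + snd p *\<^sub>R b)"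
  have "span (insert b B) \<inter> cball 0 R \<subseteq> f ` P"
  proof
    fix y assume y: "y \<in> span (insert b B) \<inter> cball 0 R"
    then obtain t where z: "y - t *\<^sub>R b \<in> span B" using span_breakdown_eq by blast
    have "\<bar>t\<bar> * infdist b (span B) \<le> norm y"
      using abs_scale_infdist_span_le_norm[OF z, of t b] by simp
    also have "\<dots> \<le> max 0 R" using y by auto
    finally have t: "\<bar>t\<bar> \<le> T" using \<delta>_pos by (simp add: T_def pos_le_divide_eq)
    have "norm (y - t *\<^sub>R b) \<le> norm y + \<bar>t\<bar> * norm b"
      using norm_triangle_ineq4[of y "t *\<^sub>R b"] by simp
    also have "\<dots> \<le> max 0 R + T * norm b" using y t by (intro add_mono mult_right_mono) auto
    finally have "(y - t *\<^sub>R b, t) \<in> P" using z t by (auto simp: P_def)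
    moreover have "y = f (y - t *\<^sub>R b, t)" by (simp add: f_def)
    ultimately show "y \<in> f ` P" by blast
  qed
  moreover have "f ` P \<subseteq> span (insert b B)"
    using span_mono[of B "insert b B"] subset_insertI[of B b]
    by (auto simp: f_def P_def span_base intro!: span_add span_scale)
  ultimately have "span (insert b B) \<inter> cball 0 R = f ` P \<inter> cball 0 R" by blast
  moreover have "compact (f ` P)"
    unfolding P_def f_def using IH
    by (intro compact_continuous_image compact_Times continuous_intros) auto
  ultimately show ?thesis by (simp add: compact_Int_closed)
qed

lemma compact_span_Int_cball:
  fixes B :: "'a::real_normed_vector set"
  assumes "finite B"
  shows "compact (span B \<inter> cball 0 R)"
  using assms
proof (induction B arbitrary: R rule: finite_induct)
  case empty
  have "span {} \<inter> cball (0::'a) R \<subseteq> {0}" by auto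
  then show ?case using finite_subset finite_imp_compact by blast
next
  case (insert b B)
  then show ?case
    by (cases "b \<in> span B") (simp_all add: span_redundant compact_span_insert_Int_cball)
qed

corollary compact_span_Int_sphere:
  fixes B :: "'a::real_normed_vector set"
  assumes "finite B"
  shows "compact (span B \<inter> sphere 0 R)"
proof -
  have "span B \<inter> sphere 0 R = (span B \<inter> cball 0 R) \<inter> - ball 0 R" by auto
  then show ?thesis
    using compact_Int_closed[OF compact_span_Int_cball[OF assms] closed_Compl[OF open_ball]] by simp
qed


section \<open>Unit balls cut out by finitely many slabs\<close>

lemma slab_intersection_perturbation:
  fixes h :: "'i \<Rightarrow> 'a::real_vector \<Rightarrow> real"
  assumes "finite G" and lin: "\<forall>l\<in>G. linear (h l)" and e: "\<forall>l\<in>G. \<bar>h l e\<bar> \<le> 1"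
    and v: "\<forall>l\<in>G. \<bar>h l e\<bar> = 1 \<longrightarrow> h l v = 0"
  obtains t where "t > 0" "\<And>u l. \<bar>u\<bar> \<le> t \<Longrightarrow> l \<in> G \<Longrightarrow> \<bar>h l (e + u *\<^sub>R v)\<bar> \<le> 1"
proof
  define Q where "Q = (\<lambda>l. (1 - \<bar>h l e\<bar>) / (\<bar>h l v\<bar> + 1)) ` {l\<in>G. \<bar>h l e\<bar> < 1}"
  define t where "t = Min (insert 1 Q)"
  have "finite Q" unfolding Q_def using \<open>finite G\<close> by simp
  then show t_pos: "t > 0" unfolding t_def by (subst Min_gr_iff) (auto simp: Q_def)
  fix u l assume u: "\<bar>u\<bar> \<le> t" and l: "l \<in> G"
  have hl: "h l (e + u *\<^sub>R v) = h l e + u * h l v"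
    using lin l by (simp add: linear_add linear_scale)
  show "\<bar>h l (e + u *\<^sub>R v)\<bar> \<le> 1"
  proof (cases "\<bar>h l e\<bar> < 1")
    case True
    have "t \<le> (1 - \<bar>h l e\<bar>) / (\<bar>h l v\<bar> + 1)"
      unfolding t_def using \<open>finite Q\<close> l True by (intro Min_le) (auto simp: Q_def)
    moreover have "\<bar>u\<bar> * \<bar>h l v\<bar> \<le> t * (\<bar>h l v\<bar> + 1)" using u t_pos by (intro mult_mono) auto
    ultimately have "\<bar>u\<bar> * \<bar>h l v\<bar> \<le> 1 - \<bar>h l e\<bar>" by (simp add: pos_le_divide_eq)
    then show ?thesis unfolding hl using abs_triangle_ineq[of "h l e" "u * h l v"]
      by (simp add: abs_mult)
  next
    case False
    moreover have "\<bar>h l e\<bar> \<le> 1" using e l by blast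
    ultimately have "\<bar>h l e\<bar> = 1" by linarith
    then show ?thesis using v l by (simp add: hl)
  qed
qed

text \<open>An extreme point is determined by the functionals on which it takes the values
  \<open>1\<close> and \<open>-1\<close>: two extreme points with the same such pattern could be moved towards
  each other inside the set.\<close>

lemma finite_extreme_points_slab_intersection:
  fixes h :: "'i \<Rightarrow> 'a::real_vector \<Rightarrow> real"
  assumes Y: "subspace Y" and G: "finite G" and lin: "\<forall>l\<in>G. linear (h l)"
  shows "finite {x. x extreme_point_of {y\<in>Y. \<forall>l\<in>G. \<bar>h l y\<bar> \<le> 1}}"
proof -
  let ?P = "{y\<in>Y. \<forall>l\<in>G. \<bar>h l y\<bar> \<le> 1}"
  let ?E = "{x. x extreme_point_of ?P}"
  define pattern where "pattern e = ({l\<in>G. h l e = 1}, {l\<in>G. h l e = -1})" for e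
  have "inj_on pattern ?E"
  proof (rule inj_onI, rule ccontr)
    fix e e' assume "e \<in> ?E" "e' \<in> ?E" and same: "pattern e = pattern e'" and "e \<noteq> e'"
    then have e: "e \<in> ?P" "\<forall>a\<in>?P. \<forall>b\<in>?P. e \<notin> open_segment a b" and e': "e' \<in> ?P"
      by (auto simp: extreme_point_of_def)
    define v where "v = e' - e"
    have "v \<in> Y" "v \<noteq> 0" using e e' Y \<open>e \<noteq> e'\<close> by (auto simp: v_def subspace_diff)
    have "h l v = 0" if "l \<in> G" "\<bar>h l e\<bar> = 1" for l
    proof -
      have "h l e' = h l e"
        using same that unfolding pattern_def by (cases "h l e \<ge> 0") (auto simp: set_eq_iff)
      then show ?thesis using lin that by (simp add: v_def linear_diff)
    qed
    then obtain t where t: "t > 0" "\<And>u l. \<bar>u\<bar> \<le> t \<Longrightarrow> l \<in> G \<Longrightarrow> \<bar>h l (e + u *\<^sub>R v)\<bar> \<le> 1"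
      using slab_intersection_perturbation[OF G lin] e by blast
    have in_P: "e + u *\<^sub>R v \<in> ?P" if "\<bar>u\<bar> \<le> t" for u
      using t that e \<open>v \<in> Y\<close> Y by (simp add: subspace_add subspace_scale)
    have "e = midpoint (e + (-t) *\<^sub>R v) (e + t *\<^sub>R v)"
      by (simp add: midpoint_def algebra_simps flip: scaleR_add_left)
    moreover have "e + (-t) *\<^sub>R v \<noteq> e + t *\<^sub>R v"
      unfolding add_left_cancel scaleR_cancel_right using t \<open>v \<noteq> 0\<close> by simp
    ultimately have "e \<in> open_segment (e + (-t) *\<^sub>R v) (e + t *\<^sub>R v)"
      by (metis midpoint_in_open_segment)
    then show False using e in_P[of "-t"] in_P[of t] t by auto
  qed
  moreover have "finite (pattern ` ?E)"
  proof (rule finite_subset)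
    show "pattern ` ?E \<subseteq> Pow G \<times> Pow G" by (auto simp: pattern_def)
    show "finite (Pow G \<times> Pow G)" using G by simp
  qed
  ultimately show ?thesis by (rule finite_imageD[rotated])
qed

lemma isomorphically_polyhedral_trivial:
  assumes "\<And>x::'a::real_normed_vector. x = 0"
  shows "isomorphically_polyhedral TYPE('a)"
proof -
  have "{x. x extreme_point_of {y\<in>Y. norm y \<le> 1}} \<subseteq> {0::'a}" for Y using assms by auto
  then have "polyhedral_norm (norm :: 'a \<Rightarrow> real)"
    unfolding polyhedral_norm_def using finite_subset by blast
  moreover have "is_norm (norm :: 'a \<Rightarrow> real)"
    unfolding is_norm_def by (auto simp: norm_triangle_ineq)
  ultimately show ?thesis
    unfolding isomorphically_polyhedral_def by (intro exI[of _ norm] conjI) (auto intro!: exI[of _ 1])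
qed

section \<open>Norms defined as suprema of functionals\<close>

locale bounded_functional_family =
  fixes h :: "'i \<Rightarrow> 'a::real_normed_vector \<Rightarrow> real" and L :: "'i set"
  assumes L_nonempty: "L \<noteq> {}"
    and linear_h: "l \<in> L \<Longrightarrow> linear (h l)"
    and uniformly_bounded: "\<exists>M>0. \<forall>l\<in>L. \<forall>x. \<bar>h l x\<bar> \<le> M * norm x"
begin

definition N :: "'a \<Rightarrow> real" where
  "N x = (SUP l\<in>L. \<bar>h l x\<bar>)"

lemma abs_h_le_N:
  assumes "l \<in> L"
  shows "\<bar>h l x\<bar> \<le> N x"
proof -
  obtain M where "\<forall>l\<in>L. \<bar>h l x\<bar> \<le> M * norm x" using uniformly_bounded by blast
  then have "bdd_above ((\<lambda>l. \<bar>h l x\<bar>) ` L)" by (intro bdd_aboveI2) auto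
  then show ?thesis unfolding N_def by (rule cSUP_upper[OF assms])
qed

lemma N_le: "(\<And>l. l \<in> L \<Longrightarrow> \<bar>h l x\<bar> \<le> c) \<Longrightarrow> N x \<le> c"
  unfolding N_def using L_nonempty by (rule cSUP_least)

lemma N_nonneg: "0 \<le> N x"
proof -
  obtain l where "l \<in> L" using L_nonempty by blast
  then show ?thesis using abs_h_le_N[of l x] abs_ge_zero[of "h l x"] by linarith
qed

lemma N_zero: "N 0 = 0"
  using N_nonneg[of 0] N_le[of 0 0] linear_h by (simp add: linear_0)

lemma N_scaleR: "N (c *\<^sub>R x) = \<bar>c\<bar> * N x"
proof (cases "c = 0")
  case False
  have "N (c *\<^sub>R x) \<le> \<bar>c\<bar> * N x"
    using linear_h abs_h_le_N by (intro N_le) (auto simp: linear_scale abs_mult intro: mult_left_mono)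
  moreover have "N x \<le> N (c *\<^sub>R x) / \<bar>c\<bar>"
  proof (rule N_le)
    fix l assume "l \<in> L"
    then have "\<bar>c\<bar> * \<bar>h l x\<bar> = \<bar>h l (c *\<^sub>R x)\<bar>" using linear_h by (simp add: linear_scale abs_mult)
    then have "\<bar>c\<bar> * \<bar>h l x\<bar> \<le> N (c *\<^sub>R x)" using abs_h_le_N \<open>l \<in> L\<close> by simp
    then show "\<bar>h l x\<bar> \<le> N (c *\<^sub>R x) / \<bar>c\<bar>" using False by (simp add: field_simps)
  qed
  ultimately show ?thesis using False by (simp add: field_simps)
qed (simp add: N_zero)

lemma N_triangle: "N (x + y) \<le> N x + N y"
proof (rule N_le)
  fix l assume l: "l \<in> L"
  have "\<bar>h l (x + y)\<bar> \<le> \<bar>h l x\<bar> + \<bar>h l y\<bar>" using linear_h[OF l] by (simp add: linear_add)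
  also have "\<dots> \<le> N x + N y" using abs_h_le_N l by (intro add_mono)
  finally show "\<bar>h l (x + y)\<bar> \<le> N x + N y" .
qed

lemma N_attained:
  assumes "finite G" "c < N x" "\<forall>l\<in>L - G. \<bar>h l x\<bar> \<le> c"
  shows "\<exists>l\<in>L \<inter> G. N x \<le> \<bar>h l x\<bar>"
proof (rule ccontr)
  assume none: "\<not> ?thesis"
  define m where "m = Max (insert c ((\<lambda>l. \<bar>h l x\<bar>) ` (L \<inter> G)))"
  have "m < N x" unfolding m_def using assms none by (subst Max_less_iff) (auto simp: not_le)
  moreover have "N x \<le> m"
  proof (rule N_le)
    fix l assume "l \<in> L"
    show "\<bar>h l x\<bar> \<le> m"
    proof (cases "l \<in> G")
      case True
      then show ?thesis using \<open>l \<in> L\<close> assms(1) unfolding m_def by (intro Max_ge) auto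
    next
      case False
      then have "\<bar>h l x\<bar> \<le> c" using assms(3) \<open>l \<in> L\<close> by blast
      also have "c \<le> m" unfolding m_def using assms(1) by (intro Max_ge) auto
      finally show ?thesis .
    qed
  qed
  ultimately show False by simp
qed

text \<open>Each \<open>h l\<close> is Lipschitz with the common constant \<open>M\<close>, which makes a strict gap between
  \<open>N\<close> and the functionals outside \<open>F\<close> persist near \<open>x\<close>.\<close>

lemma finitely_dominated_nearby:
  assumes "c < N x" "\<forall>l\<in>L - F. \<bar>h l x\<bar> \<le> c"
  obtains r where "r > 0" "\<And>y. y \<in> ball x r \<Longrightarrow> \<exists>c'<N y. \<forall>l\<in>L - F. \<bar>h l y\<bar> \<le> c'"
proof -
  obtain M where M: "M > 0" "\<And>l z. l \<in> L \<Longrightarrow> \<bar>h l z\<bar> \<le> M * norm z"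
    using uniformly_bounded by blast
  define d where "d = N x - c"
  have "d / (3 * M) > 0" using assms M by (simp add: d_def)
  moreover have "\<exists>c'<N y. \<forall>l\<in>L - F. \<bar>h l y\<bar> \<le> c'" if "y \<in> ball x (d / (3 * M))" for y
  proof -
    from that have close: "M * norm (y - x) < d / 3"
      using M by (simp add: dist_norm norm_minus_commute field_simps)
    have "N (x - y) \<le> M * norm (y - x)" using M by (intro N_le) (simp add: norm_minus_commute)
    then have "N x \<le> N y + M * norm (y - x)" using N_triangle[of y "x - y"] by simp
    moreover have "N x = c + d" "0 < d" using assms(1) by (simp_all add: d_def)
    ultimately have Ny: "c + d / 3 < N y" using close by linarith
    have "\<bar>h l y\<bar> \<le> c + d / 3" if l: "l \<in> L - F" for l
    proof -
      have "h l y = h l x + h l (y - x)" using l linear_h by (simp add: linear_diff)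
      then have "\<bar>h l y\<bar> \<le> \<bar>h l x\<bar> + \<bar>h l (y - x)\<bar>" by (metis abs_triangle_ineq)
      moreover have "\<bar>h l (y - x)\<bar> \<le> M * norm (y - x)" using M(2) l by blast
      moreover have "\<bar>h l x\<bar> \<le> c" using assms(2) l by blast
      ultimately show ?thesis using close by linarith
    qed
    with Ny show ?thesis by blast
  qed
  ultimately show thesis by (rule that)
qed

lemma finite_subfamily_attaining_N:
  assumes "compact S"
    and dom: "\<And>x. x \<in> S \<Longrightarrow> \<exists>F c. finite F \<and> c < N x \<and> (\<forall>l\<in>L - F. \<bar>h l x\<bar> \<le> c)"
  obtains G where "G \<subseteq> L" "finite G" "\<And>y. y \<in> S \<Longrightarrow> \<exists>l\<in>G. N y \<le> \<bar>h l y\<bar>"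
proof -
  have "\<exists>r F. r > 0 \<and> finite F \<and> (\<forall>y\<in>ball x r. \<exists>c'<N y. \<forall>l\<in>L - F. \<bar>h l y\<bar> \<le> c')"
    if x: "x \<in> S" for x
  proof -
    obtain F c where F: "finite F" and c: "c < N x" "\<forall>l\<in>L - F. \<bar>h l x\<bar> \<le> c"
      using dom[OF x] by blast
    obtain r where "r > 0" "\<And>y. y \<in> ball x r \<Longrightarrow> \<exists>c'<N y. \<forall>l\<in>L - F. \<bar>h l y\<bar> \<le> c'"
      using finitely_dominated_nearby[OF c] by blast
    with F show ?thesis by blast
  qed
  then obtain r F where rF: "\<And>x. x \<in> S \<Longrightarrow> r x > 0 \<and> finite (F x) \<and>
      (\<forall>y\<in>ball x (r x). \<exists>c'<N y. \<forall>l\<in>L - F x. \<bar>h l y\<bar> \<le> c')"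
    by metis
  then have "S \<subseteq> (\<Union>x\<in>S. ball x (r x))" by (meson UN_I centre_in_ball subsetI)
  then obtain D where D: "D \<subseteq> S" "finite D" "S \<subseteq> (\<Union>x\<in>D. ball x (r x))"
    using compactE_image[OF \<open>compact S\<close>, of S "\<lambda>x. ball x (r x)"] by auto
  have "finite (\<Union>x\<in>D. F x)" using D rF by blast
  show thesis
  proof
    show "L \<inter> (\<Union>x\<in>D. F x) \<subseteq> L" "finite (L \<inter> (\<Union>x\<in>D. F x))"
      using \<open>finite (\<Union>x\<in>D. F x)\<close> by auto
    fix y assume "y \<in> S"
    then obtain x where x: "x \<in> D" "y \<in> ball x (r x)" using D by auto
    then obtain c' where "c' < N y" "\<forall>l\<in>L - F x. \<bar>h l y\<bar> \<le> c'" using rF D by blast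
    then show "\<exists>l\<in>L \<inter> (\<Union>x\<in>D. F x). N y \<le> \<bar>h l y\<bar>"
      using N_attained[of "F x" c' y] rF x D by blast
  qed
qed

lemma finite_subfamily_defines_N_ball_on_span:
  assumes "finite B"
    and dom: "\<And>x. x \<noteq> 0 \<Longrightarrow> \<exists>F c. finite F \<and> c < N x \<and> (\<forall>l\<in>L - F. \<bar>h l x\<bar> \<le> c)"
  obtains G where "G \<subseteq> L" "finite G" "\<And>z. z \<in> span B \<Longrightarrow> N z \<le> 1 \<longleftrightarrow> (\<forall>l\<in>G. \<bar>h l z\<bar> \<le> 1)"
proof -
  have "\<exists>F c. finite F \<and> c < N x \<and> (\<forall>l\<in>L - F. \<bar>h l x\<bar> \<le> c)" if "x \<in> span B \<inter> sphere 0 1" for x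
    using that by (intro dom) auto
  then obtain G where G: "G \<subseteq> L" "finite G"
    and att: "\<And>y. y \<in> span B \<inter> sphere 0 1 \<Longrightarrow> \<exists>l\<in>G. N y \<le> \<bar>h l y\<bar>"
    using finite_subfamily_attaining_N[OF compact_span_Int_sphere[OF \<open>finite B\<close>]] by blast
  have attained: "\<exists>l\<in>G. N z \<le> \<bar>h l z\<bar>" if z: "z \<in> span B" "z \<noteq> 0" for z
  proof -
    have "(1 / norm z) *\<^sub>R z \<in> span B \<inter> sphere 0 1" using z by (simp add: span_scale)
    then obtain l where l: "l \<in> G" "N ((1 / norm z) *\<^sub>R z) \<le> \<bar>h l ((1 / norm z) *\<^sub>R z)\<bar>"
      using att by blast
    then have "N z / norm z \<le> \<bar>h l z\<bar> / norm z"
      using G linear_h by (auto simp: N_scaleR linear_scale abs_mult)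
    then show ?thesis using l z by (auto simp: divide_le_cancel)
  qed
  have "N z \<le> 1 \<longleftrightarrow> (\<forall>l\<in>G. \<bar>h l z\<bar> \<le> 1)" if "z \<in> span B" for z
  proof
    assume "N z \<le> 1"
    then show "\<forall>l\<in>G. \<bar>h l z\<bar> \<le> 1" using G(1) abs_h_le_N by (meson order_trans subsetD)
  next
    assume all: "\<forall>l\<in>G. \<bar>h l z\<bar> \<le> 1"
    show "N z \<le> 1"
    proof (cases "z = 0")
      case False
      then obtain l where "l \<in> G" "N z \<le> \<bar>h l z\<bar>" using attained \<open>z \<in> span B\<close> by blast
      then show ?thesis using all by fastforce
    qed (simp add: N_zero)
  qed
  with G show thesis using that by blast
qed

lemma polyhedral_norm_N:
  assumes "\<And>x. x \<noteq> 0 \<Longrightarrow> \<exists>F c. finite F \<and> c < N x \<and> (\<forall>l\<in>L - F. \<bar>h l x\<bar> \<le> c)"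
  shows "polyhedral_norm N"
  unfolding polyhedral_norm_def
proof (intro allI impI)
  fix Y :: "'a set" assume "subspace Y \<and> (\<exists>B. finite B \<and> Y = span B)"
  then obtain B where Y: "subspace Y" "finite B" "Y = span B" by blast
  then obtain G where G: "G \<subseteq> L" "finite G"
    and ball: "\<And>z. z \<in> span B \<Longrightarrow> N z \<le> 1 \<longleftrightarrow> (\<forall>l\<in>G. \<bar>h l z\<bar> \<le> 1)"
    using finite_subfamily_defines_N_ball_on_span[OF _ assms] by blast
  have "\<forall>l\<in>G. linear (h l)" using G(1) linear_h by auto
  moreover have "{y\<in>Y. N y \<le> 1} = {y\<in>Y. \<forall>l\<in>G. \<bar>h l y\<bar> \<le> 1}" using ball Y(3) by auto
  ultimately show "finite {x. x extreme_point_of {y\<in>Y. N y \<le> 1}}"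
    using finite_extreme_points_slab_intersection[OF Y(1) G(2)] by simp
qed

theorem isomorphically_polyhedral:
  assumes norm_le_N: "\<And>x. norm x \<le> N x"
    and dom: "\<And>x. x \<noteq> 0 \<Longrightarrow> \<exists>F c. finite F \<and> c < N x \<and> (\<forall>l\<in>L - F. \<bar>h l x\<bar> \<le> c)"
  shows "isomorphically_polyhedral TYPE('a)"
proof -
  obtain M where "M > 0" and bound: "\<forall>l\<in>L. \<forall>x. \<bar>h l x\<bar> \<le> M * norm x"
    using uniformly_bounded by blast
  have M: "M > 0" "N x \<le> M * norm x" for x using \<open>M > 0\<close> bound by (auto intro: N_le)
  have "is_norm N"
    unfolding is_norm_def
  proof (intro conjI allI)
    show "N x = 0 \<longleftrightarrow> x = 0" for x using norm_le_N[of x] N_zero by auto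
  qed (simp_all add: N_scaleR N_triangle)
  moreover have "\<exists>c>0. \<exists>C>0. \<forall>x. c * norm x \<le> N x \<and> N x \<le> C * norm x"
    using M norm_le_N by (intro exI[of _ 1] conjI exI[of _ M]) auto
  ultimately show ?thesis
    unfolding isomorphically_polyhedral_def using polyhedral_norm_N[OF dom] by blast
qed

end

section \<open>The renorming\<close>

text \<open>The hypotheses of the theorem after unpacking: \<open>p i x\<close> plays the role of \<open>\<parallel>x|K\<^sub>i\<parallel>\<^sub>i\<close>
  and \<open>f i\<close> enumerates its countable precisely norming set; \<open>covering\<close> combines the precise
  norming of \<open>K = \<Union>K\<^sub>n\<close> with hypothesis (ii). Nontriviality of the space only serves to
  make \<open>L\<close> nonempty, so that the supremum \<open>N\<close> is not the junk value \<open>Sup {}\<close>.\<close>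

locale polyhedral_renorming_data =
  fixes I J :: "'k set" and C eps :: "'k \<Rightarrow> real"
    and f :: "'k \<Rightarrow> nat \<Rightarrow> 'a::real_normed_vector \<Rightarrow> real" and p :: "'k \<Rightarrow> 'a \<Rightarrow> real"
    and A :: "'k \<Rightarrow> ('a \<Rightarrow> real) set"
  assumes nontrivial: "\<exists>x::'a. x \<noteq> 0"
    and C_range: "i \<in> I \<Longrightarrow> 1 < C i \<and> C i < 2"
    and C_tail_finite: "e > 0 \<Longrightarrow> finite {i\<in>I. 1 + e \<le> C i}"
    and linear_f: "i \<in> I \<Longrightarrow> linear (f i m)"
    and abs_f_le_p: "i \<in> I \<Longrightarrow> \<bar>f i m x\<bar> \<le> p i x"
    and p_attained: "i \<in> I \<Longrightarrow> \<exists>m. \<bar>f i m x\<bar> = p i x"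
    and p_le: "i \<in> I \<Longrightarrow> p i x \<le> C i * norm x"
    and eps_range: "j \<in> J \<Longrightarrow> 0 < eps j \<and> eps j < 1"
    and eps_tail_finite: "e > 0 \<Longrightarrow> finite {j\<in>J. e \<le> eps j}"
    and finite_A: "j \<in> J \<Longrightarrow> finite (A j)"
    and linear_A: "j \<in> J \<Longrightarrow> a \<in> A j \<Longrightarrow> linear a"
    and abs_A_le_norm: "j \<in> J \<Longrightarrow> a \<in> A j \<Longrightarrow> \<bar>a x\<bar> \<le> norm x"
    and covering: "x \<noteq> 0 \<Longrightarrow>
      (\<exists>i\<in>I. norm x \<le> p i x) \<or> (\<exists>j\<in>J. \<exists>a\<in>A j. (1 - eps j) * norm x \<le> \<bar>a x\<bar>)"
begin

definition w :: "'k \<Rightarrow> nat \<Rightarrow> real" where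
  "w i m = C i + (C i - 1) * (1/2) ^ m"

definition v :: "'k \<Rightarrow> real" where
  "v j = (1 + eps j) / (1 - eps j)"

definition h :: "('k \<times> nat) + ('k \<times> ('a \<Rightarrow> real)) \<Rightarrow> 'a \<Rightarrow> real" where
  "h = case_sum (\<lambda>(i, m) x. w i m * f i m x) (\<lambda>(j, a) x. v j * a x)"

definition L :: "(('k \<times> nat) + ('k \<times> ('a \<Rightarrow> real))) set" where
  "L = Inl ` (I \<times> UNIV) \<union> Inr ` (SIGMA j:J. A j)"

lemma L_cases:
  assumes "l \<in> L"
  obtains (Inl) i m where "l = Inl (i, m)" "i \<in> I"
    | (Inr) j a where "l = Inr (j, a)" "j \<in> J" "a \<in> A j"
  using assms unfolding L_def by auto

lemma h_Inl: "h (Inl (i, m)) = (\<lambda>x. w i m * f i m x)"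
  by (simp add: h_def)

lemma h_Inr: "h (Inr (j, a)) = (\<lambda>x. v j * a x)"
  by (simp add: h_def)

lemma C_less_w: "i \<in> I \<Longrightarrow> C i < w i m"
  using C_range by (simp add: w_def)

lemma one_less_w: "i \<in> I \<Longrightarrow> 1 < w i m"
  using C_less_w[of i m] C_range[of i] by linarith

lemma w_nonneg: "i \<in> I \<Longrightarrow> 0 \<le> w i m"
  using one_less_w[of i m] by linarith

lemma w_le: "i \<in> I \<Longrightarrow> w i m \<le> 2 * C i - 1"
  using C_range[of i] mult_left_mono[of "(1/2::real) ^ m" 1 "C i - 1"]
  by (simp add: w_def power_le_one)

lemma one_less_v: "j \<in> J \<Longrightarrow> 1 < v j"
  using eps_range by (simp add: v_def)

lemma v_nonneg: "j \<in> J \<Longrightarrow> 0 \<le> v j"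
  using one_less_v[of j] by linarith

lemma abs_h_Inl: "i \<in> I \<Longrightarrow> \<bar>h (Inl (i, m)) x\<bar> = w i m * \<bar>f i m x\<bar>"
  using w_nonneg[of i m] by (simp add: h_Inl abs_mult)

lemma abs_h_Inr: "j \<in> J \<Longrightarrow> \<bar>h (Inr (j, a)) x\<bar> = v j * \<bar>a x\<bar>"
  using v_nonneg[of j] by (simp add: h_Inr abs_mult)

lemma abs_h_Inl_le_p: "i \<in> I \<Longrightarrow> \<bar>h (Inl (i, m)) x\<bar> \<le> w i m * p i x"
  unfolding abs_h_Inl by (intro mult_left_mono abs_f_le_p w_nonneg)

lemma abs_h_Inl_le:
  assumes "i \<in> I"
  shows "\<bar>h (Inl (i, m)) x\<bar> \<le> w i m * C i * norm x"
proof -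
  have "w i m * p i x \<le> w i m * (C i * norm x)"
    using p_le[OF assms] w_nonneg[OF assms] by (rule mult_left_mono)
  then show ?thesis using abs_h_Inl_le_p[OF assms, of m x] by (simp only: mult.assoc)
qed

lemma abs_h_Inr_le: "j \<in> J \<Longrightarrow> a \<in> A j \<Longrightarrow> \<bar>h (Inr (j, a)) x\<bar> \<le> v j * norm x"
  unfolding abs_h_Inr by (intro mult_left_mono abs_A_le_norm v_nonneg)

lemma v_bounded: "\<exists>V. \<forall>j\<in>J. v j \<le> V"
proof -
  define T where "T = {j\<in>J. 1/2 \<le> eps j}"
  have "finite T" unfolding T_def by (rule eps_tail_finite) simp
  have "v j \<le> Max (insert 3 (v ` T))" if "j \<in> J" for j
  proof (cases "j \<in> T")
    case True
    then show ?thesis using \<open>finite T\<close> by (intro Max_ge) auto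
  next
    case False
    then have "v j \<le> 3" using eps_range[OF that] that by (simp add: T_def v_def field_simps)
    also have "3 \<le> Max (insert 3 (v ` T))" using \<open>finite T\<close> by (intro Max_ge) auto
    finally show ?thesis .
  qed
  then show ?thesis by blast
qed

lemma linear_family:
  assumes "l \<in> L"
  shows "linear (h l)"
proof -
  have scale: "linear (\<lambda>x. c * g x)" if "linear g" for c and g :: "'a \<Rightarrow> real"
    using linear_compose_scale_right[OF that, of c] by simp
  from assms show ?thesis
  proof (cases rule: L_cases)
    case (Inl i m)
    then show ?thesis by (simp add: h_Inl scale linear_f)
  next
    case (Inr j a)
    then show ?thesis by (simp add: h_Inr scale linear_A)
  qed
qed

lemma family_uniformly_bounded: "\<exists>M>0. \<forall>l\<in>L. \<forall>x. \<bar>h l x\<bar> \<le> M * norm x"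
proof -
  obtain V where V: "\<forall>j\<in>J. v j \<le> V" using v_bounded by blast
  have "\<bar>h l x\<bar> \<le> max 6 V * norm x" if "l \<in> L" for l x
    using that
  proof (cases rule: L_cases)
    case (Inl i m)
    have "w i m * C i \<le> 3 * 2"
      using w_le[OF Inl(2), of m] C_range[OF Inl(2)] C_less_w[OF Inl(2), of m] by (intro mult_mono) auto
    then have "w i m * C i * norm x \<le> max 6 V * norm x" by (intro mult_right_mono) auto
    then show ?thesis using abs_h_Inl_le[OF Inl(2), of m x] unfolding Inl(1) by linarith
  next
    case (Inr j a)
    have "v j * norm x \<le> max 6 V * norm x" using V Inr by (intro mult_right_mono) auto
    then show ?thesis using abs_h_Inr_le[OF Inr(2,3), of x] unfolding Inr(1) by linarith
  qed
  then show ?thesis by (intro exI[of _ "max 6 V"]) auto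
qed

sublocale bounded_functional_family h L
proof (rule bounded_functional_family.intro)
  obtain x :: 'a where "x \<noteq> 0" using nontrivial by blast
  then show "L \<noteq> {}" using covering[of x] by (auto simp: L_def)
qed (use linear_family family_uniformly_bounded in auto)

lemma norm_less_N:
  assumes "x \<noteq> 0"
  shows "norm x < N x"
  using covering[OF assms]
proof (elim disjE bexE)
  fix i assume i: "i \<in> I" and "norm x \<le> p i x"
  obtain m where m: "\<bar>f i m x\<bar> = p i x" using p_attained[OF i] by blast
  have "norm x < w i m * norm x" using one_less_w[OF i] assms by simp
  also have "\<dots> \<le> w i m * p i x"
    using \<open>norm x \<le> p i x\<close> w_nonneg[OF i] by (rule mult_left_mono)
  also have "\<dots> = \<bar>h (Inl (i, m)) x\<bar>" using abs_h_Inl[OF i] m by simp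
  also have "\<dots> \<le> N x" using i by (intro abs_h_le_N) (simp add: L_def)
  finally show ?thesis .
next
  fix j a assume j: "j \<in> J" and a: "a \<in> A j" and "(1 - eps j) * norm x \<le> \<bar>a x\<bar>"
  have "1 - eps j \<noteq> 0" using eps_range[OF j] by simp
  have "norm x < (1 + eps j) * norm x" using eps_range[OF j] assms by simp
  also have "\<dots> = v j * ((1 - eps j) * norm x)" using \<open>1 - eps j \<noteq> 0\<close> by (simp add: v_def)
  also have "\<dots> \<le> v j * \<bar>a x\<bar>"
    using \<open>(1 - eps j) * norm x \<le> \<bar>a x\<bar>\<close> v_nonneg[OF j] by (rule mult_left_mono)
  also have "\<dots> = \<bar>h (Inr (j, a)) x\<bar>" using abs_h_Inr[OF j] by simp
  also have "\<dots> \<le> N x" using j a by (intro abs_h_le_N) (simp add: L_def)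
  finally show ?thesis .
qed

lemma norm_le_N: "norm x \<le> N x"
  using norm_less_N N_nonneg by (cases "x = 0") (auto intro: less_imp_le)

lemma C_p_less_N:
  assumes "i \<in> I" "x \<noteq> 0"
  shows "C i * p i x < N x"
proof -
  obtain m where m: "\<bar>f i m x\<bar> = p i x" using p_attained[OF assms(1)] by blast
  show ?thesis
  proof (cases "p i x = 0")
    case True
    have "0 < N x" using norm_less_N[OF assms(2)] norm_ge_zero[of x] by linarith
    then show ?thesis using True by simp
  next
    case False
    then have "C i * p i x < w i m * p i x"
      using m C_less_w[OF assms(1)] by (intro mult_strict_right_mono) auto
    also have "\<dots> \<le> N x"
      using abs_h_le_N[of "Inl (i, m)" x] abs_h_Inl[OF assms(1)] m assms(1) by (simp add: L_def)
    finally show ?thesis .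
  qed
qed

lemma abs_h_Inl_le_limit:
  assumes "i \<in> I"
  shows "\<bar>h (Inl (i, m)) x\<bar> \<le> C i * p i x + (1/2) ^ m * (2 * norm x)"
proof -
  have "\<bar>h (Inl (i, m)) x\<bar> \<le> w i m * p i x" using abs_h_Inl_le_p[OF assms] .
  also have "\<dots> = C i * p i x + (1/2) ^ m * ((C i - 1) * p i x)" by (simp add: w_def algebra_simps)
  also have "(C i - 1) * p i x \<le> 1 * (C i * norm x)"
    using p_le[OF assms, of x] abs_f_le_p[OF assms, of 0 x] C_range[OF assms]
    by (intro mult_mono) auto
  also have "\<dots> \<le> 2 * norm x" using C_range[OF assms] mult_right_mono[of "C i" 2 "norm x"] by simp
  finally show ?thesis by (simp add: mult_left_mono)
qed

lemma abs_h_Inl_le_of_C_close: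
  assumes "i \<in> I" "C i < 1 + t / 5"
  shows "\<bar>h (Inl (i, m)) x\<bar> \<le> (1 + t) * norm x"
proof -
  have "w i m * C i \<le> (2 * C i - 1) * C i"
    using w_le[OF assms(1)] C_range[OF assms(1)] by (intro mult_right_mono) auto
  also have "\<dots> = 1 + (2 * C i + 1) * (C i - 1)" by (simp add: algebra_simps)
  also have "\<dots> \<le> 1 + 5 * (C i - 1)"
    using C_range[OF assms(1)] by (intro add_left_mono mult_right_mono) auto
  also have "\<dots> \<le> 1 + t" using assms(2) by simp
  finally have "w i m * C i * norm x \<le> (1 + t) * norm x" by (intro mult_right_mono) auto
  with abs_h_Inl_le[OF assms(1)] show ?thesis by (rule order_trans)
qed

lemma abs_h_Inr_le_of_eps_small:
  assumes "j \<in> J" "a \<in> A j" "t \<le> 1" "eps j < t / 3"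
  shows "\<bar>h (Inr (j, a)) x\<bar> \<le> (1 + t) * norm x"
proof -
  have "eps j * (2 + t) \<le> t / 3 * 3"
    using assms eps_range[OF assms(1)] by (intro mult_mono) auto
  then have "v j \<le> 1 + t" using eps_range[OF assms(1)] by (simp add: v_def field_simps)
  then have "v j * norm x \<le> (1 + t) * norm x" by (intro mult_right_mono) auto
  with abs_h_Inr_le[OF assms(1,2)] show ?thesis by (rule order_trans)
qed

lemma abs_h_Inl_eventually_le:
  assumes "0 < b"
  obtains m0 where "\<And>i m. i \<in> I \<Longrightarrow> m0 \<le> m \<Longrightarrow> \<bar>h (Inl (i, m)) x\<bar> \<le> C i * p i x + b"
proof -
  have pos: "0 < 2 * norm x + 1" by (simp add: add_nonneg_pos)
  with assms have "0 < b / (2 * norm x + 1)" by simp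
  then obtain m0 where "(1/2::real) ^ m0 < b / (2 * norm x + 1)"
    using real_arch_pow_inv[of "b / (2 * norm x + 1)" "1/2"] by auto
  then have m0: "(1/2::real) ^ m0 * (2 * norm x + 1) < b"
    by (simp add: pos_less_divide_eq[OF pos])
  show thesis
  proof (rule that)
    fix i m assume "i \<in> I" "m0 \<le> m"
    have "(1/2::real) ^ m * (2 * norm x) \<le> (1/2) ^ m0 * (2 * norm x + 1)"
      using \<open>m0 \<le> m\<close> by (intro mult_mono power_decreasing) auto
    then show "\<bar>h (Inl (i, m)) x\<bar> \<le> C i * p i x + b"
      using abs_h_Inl_le_limit[OF \<open>i \<in> I\<close>, of m x] m0 by linarith
  qed
qed

lemma abs_h_le_of_small_constants:
  assumes "l \<in> L" "t \<le> 1"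
    and "l \<notin> Inl ` ({i\<in>I. 1 + t / 5 \<le> C i} \<times> UNIV)" "l \<notin> Inr ` (SIGMA j:{j\<in>J. t / 3 \<le> eps j}. A j)"
  shows "\<bar>h l x\<bar> \<le> (1 + t) * norm x"
  using assms(1)
proof (cases rule: L_cases)
  case (Inl i m)
  then have "C i < 1 + t / 5" using assms(3) by auto
  then show ?thesis using abs_h_Inl_le_of_C_close[OF Inl(2)] Inl(1) by simp
next
  case (Inr j a)
  then have "eps j < t / 3" using assms(4) by auto
  then show ?thesis using abs_h_Inr_le_of_eps_small[OF Inr(2,3) assms(2)] Inr(1) by simp
qed

lemma finitely_dominated:
  assumes "x \<noteq> 0"
  shows "\<exists>F c. finite F \<and> c < N x \<and> (\<forall>l\<in>L - F. \<bar>h l x\<bar> \<le> c)"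
proof -
  define q where "q = N x - norm x"
  define t where "t = min 1 (q / (2 * norm x))"
  have "q > 0" using norm_less_N[OF assms] by (simp add: q_def)
  then have t: "0 < t" "t \<le> 1" "(1 + t) * norm x \<le> N x - q / 2"
    using assms by (auto simp: t_def q_def min_def field_simps)
  define TI where "TI = {i\<in>I. 1 + t / 5 \<le> C i}"
  define TJ where "TJ = {j\<in>J. t / 3 \<le> eps j}"
  have "finite TI" unfolding TI_def by (rule C_tail_finite) (use t in simp)
  have "finite TJ" unfolding TJ_def by (rule eps_tail_finite) (use t in simp)
  define \<beta> where "\<beta> = Min (insert (q / 2) ((\<lambda>i. (N x - C i * p i x) / 2) ` TI))"
  have "0 < \<beta>"
    using \<open>finite TI\<close> \<open>q > 0\<close> C_p_less_N[OF _ assms] unfolding \<beta>_def TI_def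
    by (subst Min_gr_iff) auto
  have "\<beta> \<le> q / 2" unfolding \<beta>_def using \<open>finite TI\<close> by (intro Min_le) auto
  have \<beta>_TI: "C i * p i x + \<beta> \<le> N x - \<beta>" if "i \<in> TI" for i
  proof -
    have "\<beta> \<le> (N x - C i * p i x) / 2" unfolding \<beta>_def using \<open>finite TI\<close> that by (intro Min_le) auto
    then show ?thesis by simp
  qed
  have tail: "(1 + t) * norm x \<le> N x - \<beta>" using t(3) \<open>\<beta> \<le> q / 2\<close> by linarith
  obtain m0 where m0: "\<And>i m. i \<in> I \<Longrightarrow> m0 \<le> m \<Longrightarrow> \<bar>h (Inl (i, m)) x\<bar> \<le> C i * p i x + \<beta>"
    using abs_h_Inl_eventually_le[OF \<open>0 < \<beta>\<close>] by blast
  define F where "F = Inl ` (TI \<times> {..<m0}) \<union> Inr ` (SIGMA j:TJ. A j)"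
  have "finite F" unfolding F_def using \<open>finite TI\<close> \<open>finite TJ\<close> finite_A by (auto simp: TJ_def)
  moreover have "\<bar>h l x\<bar> \<le> N x - \<beta>" if l: "l \<in> L - F" for l
  proof (cases "l \<in> Inl ` (TI \<times> UNIV)")
    case True
    then obtain i m where lim: "l = Inl (i, m)" "i \<in> TI" by blast
    have "m0 \<le> m"
    proof (rule ccontr)
      assume "\<not> m0 \<le> m"
      then have "l \<in> F" unfolding F_def lim by (intro UnI1 imageI) (auto simp: lim)
      with l show False by blast
    qed
    then show ?thesis using m0[of i m] \<beta>_TI[of i] lim by (auto simp: TI_def)
  next
    case False
    then have "\<bar>h l x\<bar> \<le> (1 + t) * norm x"
      using l t(2) by (intro abs_h_le_of_small_constants) (auto simp: F_def TI_def TJ_def)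
    then show ?thesis using tail by linarith
  qed
  ultimately show ?thesis using \<open>0 < \<beta>\<close> by (intro exI[of _ F] exI[of _ "N x - \<beta>"]) auto
qed

theorem polyhedral_renorming: "isomorphically_polyhedral TYPE('a)"
  using isomorphically_polyhedral[OF norm_le_N finitely_dominated] by blast

end

section \<open>Restrictions and countable norming sets\<close>

lemma supnorm_restr_le:
  assumes "\<forall>d\<in>L. \<bar>d x\<bar> \<le> norm x"
  shows "supnorm L (restr L x) \<le> norm x"
  unfolding supnorm_def restr_def using assms by (auto intro!: cSUP_least)

lemma abs_le_supnorm_restr:
  assumes "\<forall>d\<in>L. \<bar>d x\<bar> \<le> norm x" "k \<in> L"
  shows "\<bar>k x\<bar> \<le> supnorm L (restr L x)"
proof -
  have "bdd_above ((\<lambda>l. \<bar>restr L x l\<bar>) ` L)"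
    using assms(1) by (intro bdd_aboveI2[of _ _ "norm x"]) (auto simp: restr_def)
  from cSUP_upper[OF assms(2) this] show ?thesis
    using assms(2) by (auto simp: supnorm_def restr_def)
qed

lemma restr_lincomb:
  assumes "\<forall>d\<in>L. linear d"
  shows "restr L (a *\<^sub>R x + b *\<^sub>R y) = (\<lambda>l. a * restr L x l + b * restr L y l)"
  using assms by (auto simp: restr_def linear_add linear_scale)

lemma linear_precisely_norming_restr:
  assumes "\<forall>d\<in>L. linear d" and "precisely_norming_XL L Nrm D" and "d \<in> D"
  shows "linear (\<lambda>x. d (restr L x))"
proof -
  have "\<forall>y\<in>XL L. \<forall>z\<in>XL L. \<forall>a b. d (\<lambda>l. a * y l + b * z l) = a * d y + b * d z"
    using bspec[OF conjunct1[OF assms(2)[unfolded precisely_norming_XL_def]] assms(3)] by blast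
  moreover have "restr L x \<in> XL L" for x by (simp add: XL_def)
  ultimately have lincomb:
    "d (restr L (a *\<^sub>R x + b *\<^sub>R y)) = a * d (restr L x) + b * d (restr L y)" for a b x y
    by (simp add: restr_lincomb[OF assms(1)])
  show ?thesis
  proof (rule linearI)
    show "d (restr L (x + y)) = d (restr L x) + d (restr L y)" for x y
      using lincomb[of 1 x 1 y] by simp
    show "d (restr L (c *\<^sub>R x)) = c *\<^sub>R d (restr L x)" for c x
      using lincomb[of c x 0 x] by simp
  qed
qed

definition norming_sequence ::
  "('a::real_normed_vector \<Rightarrow> real) set \<Rightarrow> real \<Rightarrow> (nat \<Rightarrow> 'a \<Rightarrow> real) \<Rightarrow> ('a \<Rightarrow> real) \<Rightarrow> bool"
where
  "norming_sequence L C f p \<longleftrightarrow> (\<forall>m. linear (f m)) \<and> (\<forall>m x. \<bar>f m x\<bar> \<le> p x) \<and>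
    (\<forall>x. \<exists>m. \<bar>f m x\<bar> = p x) \<and> (\<forall>x. \<forall>k\<in>L. \<bar>k x\<bar> \<le> p x) \<and> (\<forall>x. p x \<le> C * norm x)"

lemma norming_sequence_of_countable_precisely_norming:
  fixes L :: "('a::real_normed_vector \<Rightarrow> real) set"
  assumes L: "\<forall>d\<in>L. linear d \<and> (\<forall>x. \<bar>d x\<bar> \<le> norm x)"
    and bounds: "\<forall>y\<in>XL L. supnorm L y \<le> Nrm y \<and> Nrm y \<le> C * supnorm L y" and "0 \<le> C"
    and "countable D" and D: "precisely_norming_XL L Nrm D"
  shows "\<exists>f p. norming_sequence L C f p"
proof -
  have restr_in: "restr L x \<in> XL L" for x by (simp add: XL_def)
  have D_le: "\<forall>y\<in>XL L. \<bar>d y\<bar> \<le> Nrm y" if "d \<in> D" for d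
    using bspec[OF conjunct1[OF D[unfolded precisely_norming_XL_def]] that] by blast
  have D_att: "\<exists>d\<in>D. \<bar>d y\<bar> = Nrm y" if "y \<in> XL L" for y
    using bspec[OF conjunct2[OF D[unfolded precisely_norming_XL_def]] that] .
  then have "D \<noteq> {}" using restr_in by blast
  define f where "f m x = from_nat_into D m (restr L x)" for m x
  define p where "p x = Nrm (restr L x)" for x
  have "linear (f m)" for m
    unfolding f_def using L D from_nat_into[OF \<open>D \<noteq> {}\<close>]
    by (intro linear_precisely_norming_restr) auto
  moreover have "\<bar>f m x\<bar> \<le> p x" for m x
    using D_le[OF from_nat_into[OF \<open>D \<noteq> {}\<close>]] restr_in unfolding f_def p_def by blast
  moreover have "\<exists>m. \<bar>f m x\<bar> = p x" for x
  proof -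
    obtain d where "d \<in> D" "\<bar>d (restr L x)\<bar> = p x" using D_att restr_in unfolding p_def by blast
    moreover obtain m where "from_nat_into D m = d" using from_nat_into_surj[OF \<open>countable D\<close> \<open>d \<in> D\<close>] ..
    ultimately show ?thesis unfolding f_def by blast
  qed
  moreover have "\<bar>k x\<bar> \<le> p x" if "k \<in> L" for k x
  proof -
    have "\<bar>k x\<bar> \<le> supnorm L (restr L x)" using abs_le_supnorm_restr[OF _ that] L by blast
    also have "\<dots> \<le> p x" using bounds restr_in unfolding p_def by blast
    finally show ?thesis .
  qed
  moreover have "p x \<le> C * norm x" for x
  proof -
    have "p x \<le> C * supnorm L (restr L x)" using bounds restr_in unfolding p_def by blast
    also have "\<dots> \<le> C * norm x" using supnorm_restr_le L \<open>0 \<le> C\<close> by (intro mult_left_mono) auto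
    finally show ?thesis .
  qed
  ultimately show ?thesis unfolding norming_sequence_def by blast
qed

lemma nearly_norming_functional:
  assumes Kj: "\<forall>d\<in>Kj. \<bar>d x\<bar> \<le> norm x" and "finite A" and "e < 1" and "x \<noteq> 0"
    and "k \<in> Kj" "\<bar>k x\<bar> = norm x"
    and "norm x = supnorm Kj (restr Kj x) \<longrightarrow>
      norm x \<le> 1 / (1 - e) * Max (insert 0 ((\<lambda>a. \<bar>a x\<bar>) ` A))"
  shows "\<exists>a\<in>A. (1 - e) * norm x \<le> \<bar>a x\<bar>"
proof -
  let ?m = "Max (insert 0 ((\<lambda>a. \<bar>a x\<bar>) ` A))"
  have "norm x = supnorm Kj (restr Kj x)"
    using supnorm_restr_le[OF Kj] abs_le_supnorm_restr[OF Kj \<open>k \<in> Kj\<close>] \<open>\<bar>k x\<bar> = norm x\<close> by linarith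
  then have "(1 - e) * norm x \<le> ?m" using assms(3,7) by (simp add: field_simps)
  moreover have "0 < (1 - e) * norm x" using assms(3,4) by simp
  moreover have "?m \<in> insert 0 ((\<lambda>a. \<bar>a x\<bar>) ` A)" using \<open>finite A\<close> by (intro Max_in) auto
  ultimately show ?thesis by auto
qed

lemma exists_norming_sequences:
  fixes Kn :: "'k \<Rightarrow> ('a::real_normed_vector \<Rightarrow> real) set"
  assumes Kn: "\<forall>i\<in>I. \<forall>d\<in>Kn i. linear d \<and> (\<forall>x. \<bar>d x\<bar> \<le> norm x)"
    and C: "\<forall>i\<in>I. 0 \<le> C i"
    and hyp: "\<forall>i\<in>I. \<exists>N. norm_on_XL (Kn i) N \<and>
        (\<forall>y\<in>XL (Kn i). supnorm (Kn i) y \<le> N y \<and> N y \<le> C i * supnorm (Kn i) y) \<and>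
        (\<exists>D. countable D \<and> precisely_norming_XL (Kn i) N D)"
  obtains f p where "\<forall>i\<in>I. norming_sequence (Kn i) (C i) (f i) (p i)"
proof -
  have "\<forall>i\<in>I. \<exists>f p. norming_sequence (Kn i) (C i) f p"
  proof
    fix i assume i: "i \<in> I"
    then obtain Nrm D
      where bounds: "\<forall>y\<in>XL (Kn i). supnorm (Kn i) y \<le> Nrm y \<and> Nrm y \<le> C i * supnorm (Kn i) y"
        and D: "countable D" "precisely_norming_XL (Kn i) Nrm D"
      using hyp by blast
    from norming_sequence_of_countable_precisely_norming[OF bspec[OF Kn i] bounds bspec[OF C i] D]
    show "\<exists>f p. norming_sequence (Kn i) (C i) f p" .
  qed
  from bchoice[OF this] obtain f where "\<forall>i\<in>I. \<exists>p. norming_sequence (Kn i) (C i) (f i) p" by blast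
  from bchoice[OF this] obtain p where "\<forall>i\<in>I. norming_sequence (Kn i) (C i) (f i) (p i)" by blast
  then show thesis by (rule that)
qed

lemma exists_nearly_norming_finite_sets:
  fixes Kn :: "'k \<Rightarrow> ('a::real_normed_vector \<Rightarrow> real) set"
  assumes Kn: "\<forall>j\<in>J. \<forall>d\<in>Kn j. \<forall>x. \<bar>d x\<bar> \<le> norm x"
    and eps: "\<forall>j\<in>J. eps j < 1"
    and hyp: "\<forall>j\<in>J. \<exists>A. finite A \<and> A \<subseteq> Kn j \<and>
        (\<forall>x. norm x = supnorm (Kn j) (restr (Kn j) x) \<longrightarrow>
             norm x \<le> 1 / (1 - eps j) * Max (insert 0 ((\<lambda>a. \<bar>a x\<bar>) ` A)))"
  obtains A where "\<And>j. j \<in> J \<Longrightarrow> finite (A j)" "\<And>j. j \<in> J \<Longrightarrow> A j \<subseteq> Kn j"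
    "\<And>j x k. j \<in> J \<Longrightarrow> x \<noteq> 0 \<Longrightarrow> k \<in> Kn j \<Longrightarrow> \<bar>k x\<bar> = norm x \<Longrightarrow>
      \<exists>a\<in>A j. (1 - eps j) * norm x \<le> \<bar>a x\<bar>"
proof -
  from bchoice[OF hyp] obtain A where A: "\<forall>j\<in>J. finite (A j) \<and> A j \<subseteq> Kn j \<and>
      (\<forall>x. norm x = supnorm (Kn j) (restr (Kn j) x) \<longrightarrow>
           norm x \<le> 1 / (1 - eps j) * Max (insert 0 ((\<lambda>a. \<bar>a x\<bar>) ` A j)))"
    by blast
  show thesis
  proof (rule that[of A])
    fix j x k assume "j \<in> J" "x \<noteq> 0" "k \<in> Kn j" "\<bar>k x\<bar> = norm x"
    with Kn eps A show "\<exists>a\<in>A j. (1 - eps j) * norm x \<le> \<bar>a x\<bar>"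
      by (intro nearly_norming_functional[of "Kn j" x "A j" "eps j" k]) auto
  qed (use A in blast)+
qed

theorem lemma2p3:
  fixes K :: "('a::banach \<Rightarrow> real) set"
    and I J :: "int set"
    and Kn :: "int \<Rightarrow> ('a \<Rightarrow> real) set"
    and C eps :: "int \<Rightarrow> real"
  assumes K_pn: "precisely_norming_X K"
    and disj: "I \<inter> J = {}"
    and Kn_sub: "\<forall>n\<in>I \<union> J. Kn n \<subseteq> K"
    and Kn_cpt: "\<forall>n\<in>I \<union> J. compact (Kn n)"
    and K_union: "K = (\<Union>n\<in>I \<union> J. Kn n)"
    and C_range: "\<forall>i\<in>I. 1 < C i \<and> C i < 2"
    and eps_range: "\<forall>j\<in>J. 0 < eps j \<and> eps j < 1"
    and C_lim: "infinite I \<longrightarrow>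
        (\<forall>i\<in>I. \<forall>i'\<in>I. i \<le> i' \<longrightarrow> C i' \<le> C i) \<and> (\<forall>e>0. finite {i\<in>I. C i \<ge> 1 + e})"
    and eps_lim: "infinite J \<longrightarrow>
        (\<forall>j\<in>J. \<forall>j'\<in>J. j \<le> j' \<longrightarrow> eps j' \<le> eps j) \<and> (\<forall>e>0. finite {j\<in>J. eps j \<ge> e})"
    and hyp_i: "\<forall>i\<in>I. \<exists>N. norm_on_XL (Kn i) N \<and>
        (\<forall>y\<in>XL (Kn i). supnorm (Kn i) y \<le> N y \<and> N y \<le> C i * supnorm (Kn i) y) \<and>
        (\<exists>D. countable D \<and> precisely_norming_XL (Kn i) N D)"
    and hyp_j: "\<forall>j\<in>J. \<exists>A. finite A \<and> A \<subseteq> Kn j \<and>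
        (\<forall>x. norm x = supnorm (Kn j) (restr (Kn j) x) \<longrightarrow>
             norm x \<le> 1 / (1 - eps j) * Max (insert 0 ((\<lambda>a. \<bar>a x\<bar>) ` A)))"
  shows "isomorphically_polyhedral TYPE('a)"
proof (cases "\<exists>x::'a. x \<noteq> 0")
  case False
  then show ?thesis by (intro isomorphically_polyhedral_trivial) blast
next
  case True
  have Kn_linear: "\<And>n d. n \<in> I \<union> J \<Longrightarrow> d \<in> Kn n \<Longrightarrow> linear d"
    and Kn_le: "\<And>n d x. n \<in> I \<union> J \<Longrightarrow> d \<in> Kn n \<Longrightarrow> \<bar>d x\<bar> \<le> norm x"
    using K_pn Kn_sub unfolding precisely_norming_X_def by blast+
  have KI: "\<forall>i\<in>I. \<forall>d\<in>Kn i. linear d \<and> (\<forall>x. \<bar>d x\<bar> \<le> norm x)" "\<forall>i\<in>I. 0 \<le> C i"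
    using Kn_linear Kn_le C_range by (blast, fastforce)
  obtain f p where fp: "\<forall>i\<in>I. norming_sequence (Kn i) (C i) (f i) (p i)"
    using exists_norming_sequences[OF KI hyp_i] by blast
  have KJ: "\<forall>j\<in>J. \<forall>d\<in>Kn j. \<forall>x. \<bar>d x\<bar> \<le> norm x" "\<forall>j\<in>J. eps j < 1"
    using Kn_le eps_range by blast+
  obtain A where A: "\<And>j. j \<in> J \<Longrightarrow> finite (A j)" "\<And>j. j \<in> J \<Longrightarrow> A j \<subseteq> Kn j"
    and A_norming: "\<And>j x k. j \<in> J \<Longrightarrow> x \<noteq> 0 \<Longrightarrow> k \<in> Kn j \<Longrightarrow> \<bar>k x\<bar> = norm x \<Longrightarrow>
      \<exists>a\<in>A j. (1 - eps j) * norm x \<le> \<bar>a x\<bar>"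
    using exists_nearly_norming_finite_sets[OF KJ hyp_j] by blast
  have covering: "(\<exists>i\<in>I. norm x \<le> p i x) \<or> (\<exists>j\<in>J. \<exists>a\<in>A j. (1 - eps j) * norm x \<le> \<bar>a x\<bar>)"
    if "x \<noteq> 0" for x
  proof -
    obtain n k where n: "n \<in> I \<union> J" "k \<in> Kn n" "\<bar>k x\<bar> = norm x"
      using K_pn K_union unfolding precisely_norming_X_def by blast
    show ?thesis
    proof (cases "n \<in> I")
      case True
      then have "\<bar>k x\<bar> \<le> p n x" using fp n(2) unfolding norming_sequence_def by blast
      then show ?thesis using True n(3) by auto
    qed (use A_norming[of n x k] n that in auto)
  qed
  have "finite {i\<in>I. 1 + e \<le> C i}" "finite {j\<in>J. e \<le> eps j}" if "e > 0" for e
    using C_lim eps_lim that by (cases "finite I"; cases "finite J"; simp)+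
  moreover have "linear a" "\<bar>a x\<bar> \<le> norm x" if "j \<in> J" "a \<in> A j" for j a x
    using A(2) Kn_linear Kn_le that by blast+
  ultimately interpret polyhedral_renorming_data I J C eps f p A
    using True C_range eps_range fp A(1) covering
    by (intro polyhedral_renorming_data.intro) (auto simp: norming_sequence_def)
  show ?thesis by (rule polyhedral_renorming)
qed

end
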